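(* Let $p$ be an odd prime, $k$ algebraically closed of characteristic $p$, $d=p^2+1$, and let $X$ be the Artin–Schreier curve $y^p-y=-x^{d}-x^{d/2+p}$ over $k$. For every $\alpha=y^mx^ndx\in\mathcal B_X$ with $m\ge\frac{p-1}{2}$, we have $\mathcal C_X(\alpha)\notin\operatorname{Span}(\mathcal C_X(\mathcal B_\alpha))$.
   Context: $\mathcal C_X$ is the Cartier operator on $H^0(X,\Omega^1_X)$: the $p^{-1}$-semilinear map with $\mathcal C_X(f^p\alpha+\beta)=f\,\mathcal C_X(\alpha)+\mathcal C_X(\beta)$, $\mathcal C_X(x^{p-1}dx)=dx$, $\mathcal C_X(x^ndx)=0$ for $n\not\equiv-1\pmod p$. For an Artin–Schreier curve $y^p-y=f$ with $f\in k[x]$ of degree $D$ prime to $p$, the set $$\mathcal B_X=\left\{y^ix^jdx:\ 0\le i\le p-2,\ 0\le j\le \left\lceil\tfrac{(p-i-1)D}{p}\right\rceil-2\right\}$$ is a $k$-basis of $H^0(X,\Omega^1_X)$. Order $\mathcal B_X$ lexicographically with $y>x$: $y^ix^jdx>y^ax^bdx$ iff $i>a$, or $i=a$ and $j>b$. For $\alpha\in\mathcal B_X$, $\mathcal B_\alpha=\{\beta\in\mathcal B_X:\beta<\alpha\}$, and for a set $A$ of differentials, $\operatorname{Span}(\mathcal C_X(A))$ is the $k$-span of $\{\mathcal C_X(a):a\in A\}$. *)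

theory Defs
  imports "HOL-Computational_Algebra.Polynomial"
begin

text \<open>Artin--Schreier curve X: y^p - y = f(x), f in k[x], k algebraically closed of
characteristic p.  A differential of the form g(x,y) dx with g a polynomial of y-degree < p
is represented by its coefficient function c :: nat \<times> nat \<Rightarrow> k, where c (i,j) is the
coefficient of the monomial differential y^i x^j dx.  Since 1,y,...,y^(p-1) are linearly
independent over k(x), this representation is faithful (two such differentials are equal
iff their coefficient functions agree).\<close>

text \<open>Inverse Frobenius (p-th root) on k; unique since k is perfect of characteristic p.\<close>
definition frob_root :: "'k::field \<Rightarrow> 'k" where
  "frob_root c = (THE r. r ^ CHAR('k) = c)"

text \<open>Using y = y^p - f we get y^i x^j = sum_l (i choose l) (y^l)^p (-f)^(i-l) x^j, and with
(-f)^(i-l) x^j = sum_n c_n x^n the rules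
C(h^p a + b) = h C(a) + C(b), C(x^(p-1) dx) = dx, C(x^n dx) = 0 for n not = -1 mod p give
C(y^i x^j dx) = sum_l sum_m ((i choose l) c_((m+1)p-1))^(1/p) y^l x^m dx.\<close>
definition cartier_mono :: "'k::field poly \<Rightarrow> nat \<Rightarrow> nat \<Rightarrow> (nat \<times> nat \<Rightarrow> 'k)" where
  "cartier_mono f i j = (\<lambda>(l, m). frob_root
      (of_nat (i choose l) * coeff ((- f) ^ (i - l) * monom 1 j) ((m + 1) * CHAR('k) - 1)))"

text \<open>The basis B_X of H^0(X, Omega^1), indexed by exponent pairs (i,j) of y^i x^j dx.\<close>
definition AS_basis :: "nat \<Rightarrow> nat \<Rightarrow> (nat \<times> nat) set" where
  "AS_basis p D = {(i, j). i \<le> p - 2 \<and>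
      int j \<le> \<lceil>real ((p - i - 1) * D) / real p\<rceil> - 2}"

definition lex_less :: "nat \<times> nat \<Rightarrow> nat \<times> nat \<Rightarrow> bool" where
  "lex_less \<beta> \<alpha> \<longleftrightarrow> fst \<beta> < fst \<alpha> \<or> (fst \<beta> = fst \<alpha> \<and> snd \<beta> < snd \<alpha>)"

definition span_of :: "'b set \<Rightarrow> ('b \<Rightarrow> 'a \<Rightarrow> 'k::field) \<Rightarrow> ('a \<Rightarrow> 'k) set" where
  "span_of S v = {w. \<exists>c. w = (\<lambda>t. \<Sum>b\<in>S. c b * v b t)}"

end

theory Submission
  imports Defs
begin

text \<open>
Write p = 2q + 1; then -f = x^d + x^e with e = 2q^2 + 4q + 2, and d = 1, 2e = 1 modulo p.
The coefficient of y^l x^M dx in C(y^i x^j dx) is the p-th root of binom(i, l)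
times the coefficient of x^((M+1)p - 1) in (x^d + x^e)^(i-l) x^j. Given alpha = y^m x^n dx,
pick a0 and c in {0, 1} with a0 + c <= q and a0 d + c e + n = -1 (mod p); this is possible
since 2 a0 + c runs through 0, ..., p - 1. At the coordinate y^(m-a0-c) x^M dx singled out
by (M+1)p - 1 = a0 d + c e + n, the entry of C(alpha) is the p-th root of
binom(m, a0+c) binom(a0+c, a0), which is nonzero as m < p. The same entry of C(beta)
vanishes for every beta = y^i x^j dx < alpha in B_X: for i < m the exponent is only reached
if j >= (m-i-1) d + e, beyond the bound defining B_X; for i = m and j < n it forces c = 1,
n = j + 2q^2 and j < q, so the exponent is a0 + j + 1 (mod p), which is not -1.
\<close>

lemma frob_root_power:
  fixes c :: "'k::alg_closed_field"
  assumes "prime CHAR('k)"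
  shows "frob_root c ^ CHAR('k) = c"
proof -
  have "CHAR('k) > 0" using assms prime_gt_0_nat by blast
  then obtain r :: 'k where r: "r ^ CHAR('k) = c" using nth_root_exists by blast
  have "s = r" if "s ^ CHAR('k) = c" for s
  proof -
    have "s ^ CHAR('k) = (s - r) ^ CHAR('k) + r ^ CHAR('k)"
      using freshmans_dream[OF assms refl, of "s - r" r] by simp
    then show "s = r" using that r by simp
  qed
  then have "frob_root c = r" unfolding frob_root_def using r by (rule the_equality[rotated])
  then show ?thesis using r by simp
qed

lemma frob_root_eq_0_iff:
  fixes c :: "'k::alg_closed_field"
  assumes "prime CHAR('k)"
  shows "frob_root c = 0 \<longleftrightarrow> c = 0"
  using frob_root_power[OF assms, of c] prime_gt_0_nat[OF assms] by auto

lemma not_in_span_of_if_coordinate: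
  assumes "w t \<noteq> 0" and "\<And>b. b \<in> S \<Longrightarrow> v b t = 0"
  shows "w \<notin> span_of S v"
  using assms unfolding span_of_def by auto

lemma prime_not_dvd_choose:
  assumes "prime (p::nat)" "n < p" "k \<le> n"
  shows "\<not> p dvd (n choose k)"
proof
  assume "p dvd (n choose k)"
  then have "p dvd fact k * fact (n - k) * (n choose k)" by simp
  then have "p dvd fact n" using binomial_fact_lemma[OF assms(3)] by simp
  then show False using assms prime_dvd_fact_iff by fastforce
qed

lemma coeff_binomial_power_times_monom:
  "coeff ((monom (1::'a::comm_semiring_1) d + monom 1 e) ^ k * monom 1 j) N =
     (\<Sum>a\<le>k. if a * d + (k - a) * e + j = N then of_nat (k choose a) else 0)"
proof -
  have "(monom (1::'a) d + monom 1 e) ^ k * monom 1 j =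
        (\<Sum>a\<le>k. of_nat (k choose a) * monom 1 d ^ a * monom 1 e ^ (k - a)) * monom 1 j"
    by (simp add: binomial_ring)
  also have "\<dots> = (\<Sum>a\<le>k. monom (of_nat (k choose a)) (a * d + (k - a) * e + j))"
    unfolding sum_distrib_right
    by (intro sum.cong refl)
      (simp add: monom_power mult_monom of_nat_monom mult.commute add.commute)
  finally show ?thesis by (simp add: coeff_sum)
qed

lemma binomial_exponent_inj:
  fixes a b k d e :: nat
  assumes "a \<le> k" "b \<le> k" "e < d" "a * d + (k - a) * e = b * d + (k - b) * e"
  shows "a = b"
proof -
  have shift: "x * d + (k - x) * e = k * e + x * (d - e)" if "x \<le> k" for x
    using that \<open>e < d\<close> by (simp add: algebra_simps diff_mult_distrib diff_mult_distrib2)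
  have "a * (d - e) = b * (d - e)"
    using shift[OF assms(1)] shift[OF assms(2)] assms(4) by linarith
  then show ?thesis using assms(3) by simp
qed

lemma coeff_binomial_power_times_monom_single:
  assumes "e < d" "a0 \<le> k" "a0 * d + (k - a0) * e + j = N"
  shows "coeff ((monom (1::'a::comm_semiring_1) d + monom 1 e) ^ k * monom 1 j) N =
           of_nat (k choose a0)"
proof -
  have "a * d + (k - a) * e + j = N \<longleftrightarrow> a = a0" if "a \<le> k" for a
    using binomial_exponent_inj[of a k a0 e d] that assms by auto
  then show ?thesis using assms(2)
    by (simp add: coeff_binomial_power_times_monom if_distrib cong: if_cong)
qed

lemma AS_basis_iff:
  assumes "p > 0"
  shows "(i, j) \<in> AS_basis p D \<longleftrightarrow> i \<le> p - 2 \<and> (j + 1) * p < (p - i - 1) * D"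
proof -
  have "int j \<le> \<lceil>real ((p - i - 1) * D) / real p\<rceil> - 2 \<longleftrightarrow>
        real (j + 1) < real ((p - i - 1) * D) / real p"
    by (simp add: le_diff_eq le_ceiling_iff)
  also have "\<dots> \<longleftrightarrow> real ((j + 1) * p) < real ((p - i - 1) * D)"
    using assms by (simp only: pos_less_divide_eq of_nat_0_less_iff of_nat_mult)
  also have "\<dots> \<longleftrightarrow> (j + 1) * p < (p - i - 1) * D"
    by (rule of_nat_less_iff)
  finally show ?thesis unfolding AS_basis_def by auto
qed

locale AS_example_curve =
  fixes p q d e :: nat and f :: "'k::alg_closed_field poly"
  assumes prime_p: "prime p" and p_eq: "p = 2 * q + 1" and char_k: "CHAR('k) = p"
    and d_eq: "d = p ^ 2 + 1" and e_eq: "e = d div 2 + p"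
    and f_eq: "f = - monom 1 d - monom 1 e"
begin

lemma d_eq_q: "d = 4 * q * q + 4 * q + 2"
  unfolding d_eq p_eq by (simp add: power2_eq_square algebra_simps)

lemma e_eq_q: "e = 2 * q * q + 4 * q + 2"
  unfolding e_eq d_eq_q p_eq by simp

lemma p_pos: "p > 0"
  unfolding p_eq by simp

lemma e_less_d: "e < d"
proof -
  have "q > 0" using prime_p prime_gt_1_nat unfolding p_eq by (cases q) auto
  then show ?thesis unfolding d_eq_q e_eq_q by simp
qed

lemma prime_char: "prime CHAR('k)"
  using prime_p char_k by simp

lemma minus_f: "- f = monom 1 d + monom 1 e"
  using f_eq by simp

lemma degree_f: "degree f = d"
proof -
  have "degree (monom (1::'k) d + monom 1 e) = d"
    using e_less_d by (subst degree_add_eq_left) (simp_all add: degree_monom_eq)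
  then show ?thesis using minus_f by (metis degree_minus)
qed

lemma basis_iff:
  "(i, j) \<in> AS_basis p (degree f) \<longleftrightarrow> i \<le> p - 2 \<and> (j + 1) * p < (p - i - 1) * d"
  using AS_basis_iff[OF p_pos] degree_f by simp

lemma cartier_mono_f:
  "cartier_mono f i j (l, M) = frob_root (of_nat (i choose l) *
     coeff ((monom 1 d + monom 1 e) ^ (i - l) * monom 1 j) ((M + 1) * p - 1))"
  unfolding cartier_mono_def minus_f char_k by simp

definition pivot :: "nat \<Rightarrow> nat \<Rightarrow> nat \<Rightarrow> nat \<Rightarrow> bool" where
  "pivot n a0 c M \<longleftrightarrow> c \<le> 1 \<and> a0 + c \<le> q \<and> a0 * d + c * e + n + 1 = (M + 1) * p"

lemma pivot_exists: "\<exists>a0 c M. pivot n a0 c M"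
proof -
  \<comment> \<open>As 4q = -2 (mod p), r is the residue of -2(n+1); then 2 a0 + c = r.\<close>
  define r where "r = 4 * q * (n + 1) mod p"
  define a0 c where "a0 = r div 2" and "c = r mod 2"
  have "4 * q * (n + 1) + 2 * (n + 1) = 2 * (n + 1) * p"
    unfolding p_eq by (simp add: algebra_simps)
  then have "p dvd 4 * q * (n + 1) + 2 * (n + 1)" by simp
  then have "p dvd r + 2 * (n + 1)"
    unfolding r_def by (simp only: dvd_eq_mod_eq_0 mod_add_left_eq)
  moreover have
    "2 * (a0 * d + c * e + n + 1) = p * (2 * a0 * p + c * p + 2 * c) + (r + 2 * (n + 1))"
  proof -
    have "r = 2 * a0 + c" unfolding a0_def c_def by simp
    then show ?thesis unfolding d_eq_q e_eq_q p_eq by (simp add: algebra_simps)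
  qed
  ultimately have "p dvd 2 * (a0 * d + c * e + n + 1)"
    by (metis dvd_add dvd_triv_left)
  moreover have "coprime p 2" unfolding p_eq by simp
  ultimately have "p dvd a0 * d + c * e + n + 1"
    by (metis coprime_dvd_mult_right_iff)
  then obtain M' where M': "a0 * d + c * e + n + 1 = M' * p"
    by (metis dvdE mult.commute)
  then have "M' = (M' - 1) + 1" by (cases M') auto
  moreover have "r < p" unfolding r_def using p_pos by simp
  then have "c \<le> 1" "a0 + c \<le> q"
    unfolding a0_def c_def p_eq by presburger+
  ultimately show ?thesis unfolding pivot_def using M' by metis
qed

lemma lower_row_misses_pivot:
  assumes "q \<le> m" "pivot n a0 c M" "i < m" "(j + 1) * p < (p - i - 1) * d"
    and "i + (a0 + c) = m + k" "a \<le> k" "a * d + (k - a) * e + j = a0 * d + c * e + n"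
  shows False
proof -
  define \<delta> where "\<delta> = m - i - 1"
  have c: "c \<le> 1" and k: "a0 + c = k + \<delta> + 1"
    using assms(2,3,5) unfolding pivot_def \<delta>_def by auto
  have "a * d + (k - a) * e \<le> k * d"
  proof -
    have "(k - a) * e \<le> (k - a) * d" using e_less_d by simp
    moreover have "a * d + (k - a) * d = k * d"
      using assms(6) by (simp flip: add_mult_distrib)
    ultimately show ?thesis by linarith
  qed
  then have "a0 * d + c * e \<le> j + k * d" using assms(7) by linarith
  then have j: "\<delta> * d + e \<le> j"
    using c k e_less_d by (cases c) (auto simp: algebra_simps)
  have "(p - i - 1) * d \<le> (q + \<delta> + 1) * d"
    using assms(1) unfolding \<delta>_def p_eq by (intro mult_right_mono) linarith+
  also have "\<dots> \<le> (\<delta> * d + e + 1) * p"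
  proof -
    have "\<delta> * d \<le> \<delta> * d * p" using p_pos by simp
    moreover have "(q + 1) * d \<le> (e + 1) * p"
      unfolding d_eq_q e_eq_q p_eq by (simp add: algebra_simps)
    moreover have "(q + \<delta> + 1) * d = (q + 1) * d + \<delta> * d"
      and "(\<delta> * d + e + 1) * p = \<delta> * d * p + (e + 1) * p"
      by (simp_all add: algebra_simps)
    ultimately show ?thesis by linarith
  qed
  also have "\<dots> \<le> (j + 1) * p" using j by simp
  finally show False using assms(4) by simp
qed

lemma same_row_misses_pivot:
  assumes "q \<le> m" "pivot n a0 c M" "(n + 1) * p < (p - m - 1) * d" "j < n"
    and "a \<le> a0 + c" "a * d + (a0 + c - a) * e + j = a0 * d + c * e + n"
  shows False
proof -
  have c: "c \<le> 1" "a0 + c \<le> q" and N: "a0 * d + c * e + n + 1 = (M + 1) * p"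
    using assms(2) unfolding pivot_def by auto
  have "a0 < a"
  proof (rule ccontr)
    assume "\<not> a0 < a"
    then have "a * d + (a0 + c - a) * e = a * d + (a0 - a) * e + c * e"
      and "a * d + (a0 - a) * d = a0 * d"
      by (simp_all flip: add_mult_distrib)
    moreover have "(a0 - a) * e \<le> (a0 - a) * d" using e_less_d by simp
    ultimately show False using assms(4,6) by linarith
  qed
  then have c1: "c = 1" "a = a0 + 1" using assms(5) c by linarith+
  then have n: "n = j + 2 * q * q"
    using assms(6) unfolding d_eq_q e_eq_q by (simp add: algebra_simps)
  have "j < q"
  proof (rule ccontr)
    assume "\<not> j < q"
    then obtain u where "j = q + u" by (auto simp: not_less le_iff_add)
    then have "q * d \<le> (n + 1) * p" unfolding n d_eq_q p_eq by (simp add: algebra_simps)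
    moreover have "(p - m - 1) * d \<le> q * d"
      using assms(1) unfolding p_eq by (intro mult_right_mono) auto
    ultimately show False using assms(3) by linarith
  qed
  have "(M + 1) * p = p * ((a0 + 1) * p) + (a0 + j + 2)"
    using N unfolding c1 n d_eq_q e_eq_q p_eq by (simp add: algebra_simps)
  then have "p dvd a0 + j + 2"
    by (metis dvd_add_right_iff dvd_triv_left dvd_triv_right)
  moreover have "a0 + j + 2 < p" using c c1 \<open>j < q\<close> unfolding p_eq by linarith
  ultimately show False using dvd_imp_le by fastforce
qed

lemma cartier_pivot_nonzero:
  assumes "(m, n) \<in> AS_basis p (degree f)" "q \<le> m" "pivot n a0 c M"
  shows "cartier_mono f m n (m - (a0 + c), M) \<noteq> 0"
proof -
  have c: "a0 + c \<le> q" "a0 * d + c * e + n + 1 = (M + 1) * p"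
    using assms(3) unfolding pivot_def by auto
  have km: "a0 + c \<le> m" and "m < p"
    using assms(1,2) c(1) unfolding basis_iff by (auto simp: p_eq)
  have "coeff ((monom 1 d + monom 1 e) ^ (a0 + c) * monom 1 n) ((M + 1) * p - 1) =
          (of_nat ((a0 + c) choose a0) :: 'k)"
    by (rule coeff_binomial_power_times_monom_single) (use e_less_d c in auto)
  moreover have "\<not> p dvd (m choose (m - (a0 + c)))" "\<not> p dvd ((a0 + c) choose a0)"
    using prime_not_dvd_choose[OF prime_p] \<open>m < p\<close> km by auto
  then have "of_nat (m choose (m - (a0 + c))) * of_nat ((a0 + c) choose a0) \<noteq> (0::'k)"
    unfolding of_nat_mult[symmetric] of_nat_eq_0_iff_char_dvd char_k
    using prime_p prime_dvd_mult_iff by blast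
  ultimately show ?thesis
    unfolding cartier_mono_f using km by (simp add: frob_root_eq_0_iff[OF prime_char])
qed

lemma cartier_pivot_vanishes_below:
  assumes "(m, n) \<in> AS_basis p (degree f)" "q \<le> m" "pivot n a0 c M"
    and "(i, j) \<in> AS_basis p (degree f)" "lex_less (i, j) (m, n)"
  shows "cartier_mono f i j (m - (a0 + c), M) = 0"
proof (cases "m - (a0 + c) \<le> i")
  case False
  then show ?thesis
    unfolding cartier_mono_f by (simp add: binomial_eq_0 frob_root_eq_0_iff[OF prime_char])
next
  case True
  define k where "k = i - (m - (a0 + c))"
  have "a0 + c \<le> m" using assms(2,3) unfolding pivot_def by auto
  then have ik: "i + (a0 + c) = m + k" using True unfolding k_def by simp
  have "a * d + (k - a) * e + j \<noteq> (M + 1) * p - 1" if "a \<le> k" for a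
  proof
    assume "a * d + (k - a) * e + j = (M + 1) * p - 1"
    then have hit: "a * d + (k - a) * e + j = a0 * d + c * e + n"
      using assms(3) unfolding pivot_def by (elim conjE) linarith
    show False
    proof (cases "i < m")
      case True
      then show False
        using lower_row_misses_pivot[OF assms(2,3) True _ ik that hit] assms(4) basis_iff by simp
    next
      case False
      then have "i = m" "j < n" using assms(5) unfolding lex_less_def by auto
      then show False
        using same_row_misses_pivot[OF assms(2,3) _ \<open>j < n\<close>] ik that hit assms(1) basis_iff
        by simp
    qed
  qed
  then show ?thesis
    unfolding cartier_mono_f k_def[symmetric] coeff_binomial_power_times_monom
    by (simp add: frob_root_eq_0_iff[OF prime_char])
qed

end

theorem mainTheorem6:
  fixes p d m n :: nat and f :: "'k::alg_closed_field poly"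
  assumes "prime p" and "odd p" and "CHAR('k) = p"
    and "d = p ^ 2 + 1"
    and "f = - monom 1 d - monom 1 (d div 2 + p)"
    and "(m, n) \<in> AS_basis p (degree f)"
    and "real m \<ge> (real p - 1) / 2"
  shows "cartier_mono f m n \<notin>
           span_of {\<beta> \<in> AS_basis p (degree f). lex_less \<beta> (m, n)}
                   (\<lambda>\<beta>. cartier_mono f (fst \<beta>) (snd \<beta>))"
proof -
  interpret AS_example_curve p "p div 2" d "d div 2 + p" f
    using assms(1-5) by unfold_locales simp_all
  have "real p \<le> real (2 * m + 1)" using assms(7) by (simp add: field_simps)
  then have "p div 2 \<le> m" by (simp only: of_nat_le_iff)
  obtain a0 c M where "pivot n a0 c M" using pivot_exists by blast
  then show ?thesis
    using cartier_pivot_nonzero cartier_pivot_vanishes_below assms(6) \<open>p div 2 \<le> m\<close>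
    by (intro not_in_span_of_if_coordinate[where t = "(m - (a0 + c), M)"]) auto
qed

end
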